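(* Let $\mathcal{F}=\mathcal{B}(K_3)$. For every odd integer $n\ge 3$ with $n\ne 5$, $f(n,\mathcal{F})=2^{n-2}$.
   Context: For a graph $G$, a hypergraph $H$ is a Berge-$G$ hypergraph if there are an injective map $\phi:V(G)\to V(H)$ and pairwise distinct hyperedges $e_{xy}\in E(H)$, one for each $xy\in E(G)$, with $\phi(x),\phi(y)\in e_{xy}$. $\mathcal{B}(G)$ denotes the family of all Berge-$G$ hypergraphs. For a positive integer $n$ and a graph $G$, $f(n,\mathcal{B}(G))$ is the smallest number of colors in a coloring of all subsets of $[n]=\{1,\dots,n\}$ (i.e. of $2^{[n]}$) such that there is no monochromatic Berge-$G$ hypergraph, i.e. no color class, viewed as a (non-uniform) hypergraph on $[n]$, contains a Berge-$G$ subhypergraph. *)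

theory Defs
  imports Main
begin

text \<open>A graph G is given by a vertex set V and an edge set E (each edge a 2-element subset of V).\<close>

definition berge_copy :: "'v set \<Rightarrow> 'v set set \<Rightarrow> 'u set \<Rightarrow> 'u set set \<Rightarrow> bool" where
  "berge_copy V E U H \<longleftrightarrow>
     (\<exists>\<phi> \<epsilon>. inj_on \<phi> V \<and> \<phi> ` V \<subseteq> U \<and> inj_on \<epsilon> E \<and> \<epsilon> ` E \<subseteq> H \<and>
            (\<forall>xy\<in>E. \<phi> ` xy \<subseteq> \<epsilon> xy))"

definition f_berge :: "nat \<Rightarrow> 'v set \<Rightarrow> 'v set set \<Rightarrow> nat" where
  "f_berge n V E = (LEAST k. \<exists>c :: nat set \<Rightarrow> nat.
      (\<forall>A\<in>Pow {1..n}. c A < k) \<and>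
      (\<forall>i<k. \<not> berge_copy V E {1..n} {A \<in> Pow {1..n}. c A = i}))"

definition K3_V :: "nat set" where "K3_V = {0, 1, 2}"
definition K3_E :: "nat set set" where "K3_E = {{0, 1}, {1, 2}, {0, 2}}"

end

theory Submission
  imports Defs
begin

text \<open>Fix \<open>a \<noteq> b\<close> in \<open>U\<close> and colour a set \<open>A\<close> by the trace on \<open>U - {a, b}\<close> of whichever of
\<open>A\<close>, \<open>U - A\<close> avoids \<open>b\<close>. A colour class then lies in \<open>{T, U - T, T \<union> {a}, U - (T \<union> {a})}\<close>,
and any three of these sets include a complementary, hence disjoint, pair; so \<open>2^(n-2)\<close> colours
avoid Berge triangles. Conversely, for odd \<open>n\<close> the \<open>2^(n-1)\<close> majority subsets pair off with
their complements, and any three of them form a Berge triangle unless \<open>n = 5\<close>: either a point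
lies in exactly two of them and counting gives the other two vertices, or all pairwise
intersections coincide, and then the common core has at least three points. Hence every colour
class holds at most two majority sets.\<close>

definition berge_triangle :: "'a set \<Rightarrow> 'a set \<Rightarrow> 'a set \<Rightarrow> bool" where
  "berge_triangle A B C \<longleftrightarrow>
     (\<exists>x y z. x \<noteq> y \<and> y \<noteq> z \<and> x \<noteq> z \<and> x \<in> A \<and> y \<in> A \<and> y \<in> B \<and> z \<in> B \<and> x \<in> C \<and> z \<in> C)"

lemma berge_triangleI:
  assumes "x \<noteq> y" "y \<noteq> z" "x \<noteq> z" "x \<in> A" "y \<in> A" "y \<in> B" "z \<in> B" "x \<in> C" "z \<in> C"
  shows "berge_triangle A B C"
  unfolding berge_triangle_def using assms by blast

lemma berge_triangle_rotate:
  assumes "berge_triangle B C A"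
  shows "berge_triangle A B C"
proof -
  from assms obtain x y z where
    "x \<noteq> y" "y \<noteq> z" "x \<noteq> z" "x \<in> B" "y \<in> B" "y \<in> C" "z \<in> C" "x \<in> A" "z \<in> A"
    unfolding berge_triangle_def by blast
  then show ?thesis by (intro berge_triangleI[of z x y]) auto
qed

lemma berge_copy_K3_iff:
  assumes "H \<subseteq> Pow U"
  shows "berge_copy K3_V K3_E U H \<longleftrightarrow>
    (\<exists>A\<in>H. \<exists>B\<in>H. \<exists>C\<in>H. A \<noteq> B \<and> B \<noteq> C \<and> A \<noteq> C \<and> berge_triangle A B C)"
proof
  assume "berge_copy K3_V K3_E U H"
  then obtain \<phi> \<epsilon> where \<phi>: "inj_on \<phi> K3_V" and \<epsilon>: "inj_on \<epsilon> K3_E" "\<epsilon> ` K3_E \<subseteq> H"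
    and edge: "\<forall>xy\<in>K3_E. \<phi> ` xy \<subseteq> \<epsilon> xy"
    unfolding berge_copy_def by (elim exE conjE) (rule that)
  have "\<phi> 0 \<noteq> \<phi> 1" "\<phi> 1 \<noteq> \<phi> 2" "\<phi> 0 \<noteq> \<phi> 2"
    using \<phi> unfolding K3_V_def inj_on_def by auto
  moreover have "\<epsilon> {0,1} \<noteq> \<epsilon> {1,2}" "\<epsilon> {1,2} \<noteq> \<epsilon> {0,2}" "\<epsilon> {0,1} \<noteq> \<epsilon> {0,2}"
    using \<epsilon>(1) unfolding K3_E_def inj_on_def by (auto simp: doubleton_eq_iff)
  moreover have "\<epsilon> {0,1} \<in> H" "\<epsilon> {1,2} \<in> H" "\<epsilon> {0,2} \<in> H"
    using \<epsilon>(2) unfolding K3_E_def by auto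
  moreover have "berge_triangle (\<epsilon> {0,1}) (\<epsilon> {1,2}) (\<epsilon> {0,2})"
    using edge calculation(1-3) unfolding K3_E_def
    by (intro berge_triangleI[of "\<phi> 0" "\<phi> 1" "\<phi> 2"]) auto
  ultimately show "\<exists>A\<in>H. \<exists>B\<in>H. \<exists>C\<in>H. A \<noteq> B \<and> B \<noteq> C \<and> A \<noteq> C \<and> berge_triangle A B C"
    by blast
next
  assume "\<exists>A\<in>H. \<exists>B\<in>H. \<exists>C\<in>H. A \<noteq> B \<and> B \<noteq> C \<and> A \<noteq> C \<and> berge_triangle A B C"
  then obtain A B C x y z where ABC: "A \<in> H" "B \<in> H" "C \<in> H" "A \<noteq> B" "B \<noteq> C" "A \<noteq> C"
    and xyz: "x \<noteq> y" "y \<noteq> z" "x \<noteq> z" "x \<in> A" "y \<in> A" "y \<in> B" "z \<in> B" "x \<in> C" "z \<in> C"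
    unfolding berge_triangle_def by blast
  define \<phi> where "\<phi> = (\<lambda>v::nat. if v = 0 then x else if v = 1 then y else z)"
  define \<epsilon> where "\<epsilon> = (\<lambda>e::nat set. if e = {0,1} then A else if e = {1,2} then B else C)"
  have "inj_on \<phi> K3_V" "\<phi> ` K3_V \<subseteq> U"
    using xyz ABC assms unfolding inj_on_def K3_V_def \<phi>_def by auto
  moreover have "inj_on \<epsilon> K3_E" "\<epsilon> ` K3_E \<subseteq> H" "\<forall>xy\<in>K3_E. \<phi> ` xy \<subseteq> \<epsilon> xy"
    using xyz ABC unfolding inj_on_def K3_E_def \<epsilon>_def \<phi>_def by (auto simp: doubleton_eq_iff)
  ultimately show "berge_copy K3_V K3_E U H"
    unfolding berge_copy_def by blast
qed

lemma berge_copy_K3I: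
  assumes "H \<subseteq> Pow U" "A \<in> H" "B \<in> H" "C \<in> H" "A \<noteq> B" "B \<noteq> C" "A \<noteq> C"
    "berge_triangle A B C"
  shows "berge_copy K3_V K3_E U H"
  unfolding berge_copy_K3_iff[OF assms(1)] using assms(2-) by blast

lemma card_add_le_card_Int:
  assumes "finite U" "A \<subseteq> U" "B \<subseteq> U"
  shows "card A + card B \<le> card U + card (A \<inter> B)"
proof -
  have "finite A" "finite B" using assms by (simp_all add: finite_subset)
  then have "card A + card B = card (A \<union> B) + card (A \<inter> B)" by (rule card_Un_Int)
  moreover have "card (A \<union> B) \<le> card U" using assms by (intro card_mono) auto
  ultimately show ?thesis by linarith
qed

lemma obtain_distinct_pair:
  assumes "2 \<le> card (P \<union> Q)" "P \<noteq> {}" "Q \<noteq> {}"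
  obtains x z where "x \<in> P" "z \<in> Q" "x \<noteq> z"
proof -
  obtain p q where "p \<in> P" "q \<in> Q" using assms(2,3) by blast
  moreover have "\<not> P \<union> Q \<subseteq> {p}"
    using assms(1) card_mono[of "{p}" "P \<union> Q"] by auto
  ultimately show ?thesis using that by blast
qed

lemma majority_berge_triangle_of_mem_diff:
  assumes U: "finite U" "A \<subseteq> U" "B \<subseteq> U" "C \<subseteq> U"
    and maj: "card U < 2 * card A" "card U < 2 * card B" "card U < 2 * card C"
    and "A \<noteq> B" and y: "y \<in> A" "y \<in> B" "y \<notin> C"
  shows "berge_triangle A B C"
proof -
  have fin: "finite A" "finite B" using U by (simp_all add: finite_subset)
  have "A \<subset> A \<union> B \<or> B \<subset> A \<union> B" using \<open>A \<noteq> B\<close> by blast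
  then have "card A < card (A \<union> B) \<or> card B < card (A \<union> B)"
    using fin by (auto intro: psubset_card_mono)
  moreover have "card (A \<union> B) + card C \<le> card U + card ((A \<union> B) \<inter> C)"
    using U by (intro card_add_le_card_Int) auto
  ultimately have "2 \<le> card (A \<inter> C \<union> B \<inter> C)"
    using maj by (simp add: Int_Un_distrib2) linarith
  moreover have "A \<inter> C \<noteq> {}" "B \<inter> C \<noteq> {}"
    using card_add_le_card_Int[OF U(1,2,4)] card_add_le_card_Int[OF U(1,3,4)] maj by auto
  ultimately obtain x z where "x \<in> A \<inter> C" "z \<in> B \<inter> C" "x \<noteq> z"
    by (rule obtain_distinct_pair)
  then show ?thesis using y by (intro berge_triangleI[of x y z]) auto
qed

lemma majority_berge_triangle_of_common_Int:
  assumes U: "finite U" "A \<subseteq> U" "B \<subseteq> U" "C \<subseteq> U" "card U \<noteq> 5"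
    and maj: "card U < 2 * card A" "card U < 2 * card B" "card U < 2 * card C"
    and distinct: "A \<noteq> B" "B \<noteq> C" "A \<noteq> C"
    and I: "A \<inter> B = I" "A \<inter> C = I" "B \<inter> C = I"
  shows "berge_triangle A B C"
proof -
  \<comment> \<open>Every majority set has at least \<open>q + 1\<close> elements; linear arithmetic needs this integral form.\<close>
  define q where "q = card U div 2"
  have fin: "finite A" "finite B" "finite C" using U by (simp_all add: finite_subset)
  have sub: "I \<subseteq> A" "I \<subseteq> B" "I \<subseteq> C" using I by blast+
  have "card (A \<union> B \<union> C) + 2 * card I = card A + card B + card C"
    using card_Un_Int[of A B] card_Un_Int[of "A \<union> B" C] fin I by (simp add: Int_Un_distrib2)
  moreover have "card (A \<union> B \<union> C) \<le> card U" using U by (intro card_mono) auto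
  ultimately have upper: "card A + card B + card C \<le> card U + 2 * card I" by linarith
  have parity: "2 * q + card U mod 2 = card U" "card U mod 2 \<le> 1" by (simp_all add: q_def)
  then have "q < card A" "q < card B" "q < card C" using maj by linarith+
  moreover have "card I \<le> card A" "card I \<le> card B" "card I \<le> card C"
    using fin sub by (simp_all add: card_mono)
  moreover have "(card I < card A \<and> card I < card B) \<or> (card I < card B \<and> card I < card C)
      \<or> (card I < card A \<and> card I < card C)"
    using distinct sub fin by (metis psubset_card_mono psubsetI)
  ultimately have lower: "q + 2 * card I + 3 \<le> card A + card B + card C"
    "3 * q + 3 \<le> card A + card B + card C"
    by auto
  have "3 \<le> card I"
  proof (rule ccontr)
    assume "\<not> 3 \<le> card I"
    consider "card U < 5" | "5 < card U" using \<open>card U \<noteq> 5\<close> by linarith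
    then show False by cases (use upper lower parity \<open>\<not> 3 \<le> card I\<close> in linarith)+
  qed
  then obtain J where "J \<subseteq> I" "card J = 3" by (rule obtain_subset_with_card_n)
  then obtain x y z where "x \<in> I" "y \<in> I" "z \<in> I" "x \<noteq> y" "y \<noteq> z" "x \<noteq> z"
    unfolding card_3_iff by auto
  then show ?thesis using sub by (intro berge_triangleI[of x y z]) auto
qed

lemma majority_berge_triangle:
  assumes U: "finite U" "A \<subseteq> U" "B \<subseteq> U" "C \<subseteq> U" "card U \<noteq> 5"
    and maj: "card U < 2 * card A" "card U < 2 * card B" "card U < 2 * card C"
    and distinct: "A \<noteq> B" "B \<noteq> C" "A \<noteq> C"
  shows "berge_triangle A B C"
proof -
  consider y where "y \<in> A" "y \<in> B" "y \<notin> C" | y where "y \<in> B" "y \<in> C" "y \<notin> A"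
    | y where "y \<in> C" "y \<in> A" "y \<notin> B"
    | "A \<inter> B = A \<inter> B \<inter> C" "A \<inter> C = A \<inter> B \<inter> C" "B \<inter> C = A \<inter> B \<inter> C"
    by blast
  then show ?thesis
  proof cases
    case 1
    with U maj distinct show ?thesis by (intro majority_berge_triangle_of_mem_diff)
  next
    case 2
    with U maj distinct have "berge_triangle B C A" by (intro majority_berge_triangle_of_mem_diff)
    then show ?thesis by (rule berge_triangle_rotate)
  next
    case 3
    with U maj distinct(3)[symmetric] have "berge_triangle C A B"
      by (intro majority_berge_triangle_of_mem_diff)
    then have "berge_triangle B C A" by (rule berge_triangle_rotate)
    then show ?thesis by (rule berge_triangle_rotate)
  next
    case 4
    with U maj distinct show ?thesis by (intro majority_berge_triangle_of_common_Int)
  qed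
qed

lemma card_majority_subsets:
  assumes "finite U" "odd (card U)"
  shows "card {A \<in> Pow U. card U < 2 * card A} = 2 ^ (card U - 1)"
proof -
  define L where "L = {A \<in> Pow U. card U < 2 * card A}"
  have card_compl: "card (U - A) = card U - card A" if "A \<subseteq> U" for A
    using assms(1) that by (simp add: card_Diff_subset finite_subset)
  have card_le: "card A \<le> card U" if "A \<subseteq> U" for A
    using assms(1) that by (rule card_mono)
  have "Pow U = L \<union> (\<lambda>A. U - A) ` L"
  proof (intro equalityI subsetI)
    fix A assume A: "A \<in> Pow U"
    show "A \<in> L \<union> (\<lambda>A. U - A) ` L"
    proof (cases "card U < 2 * card A")
      case True
      with A show ?thesis by (simp add: L_def)
    next
      case False
      have "2 * card A \<noteq> card U" by (metis assms(2) dvd_triv_left)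
      with False have "card U < 2 * card (U - A)"
        using A card_compl[of A] card_le[of A] by auto
      with A have "U - A \<in> L" by (simp add: L_def)
      moreover have "A = U - (U - A)" using A by blast
      ultimately show ?thesis by blast
    qed
  qed (auto simp: L_def)
  moreover have "L \<inter> (\<lambda>A. U - A) ` L = {}"
    using card_compl card_le by (fastforce simp: L_def)
  moreover have "card ((\<lambda>A. U - A) ` L) = card L"
    by (rule card_image) (auto simp: L_def inj_on_def)
  moreover have "finite L" using assms(1) by (simp add: L_def)
  ultimately have "2 ^ card U = 2 * card L"
    using card_Pow[OF assms(1)] card_Un_disjoint[of L "(\<lambda>A. U - A) ` L"] by simp
  moreover have "(2::nat) ^ card U = 2 * 2 ^ (card U - 1)"
    using assms(2) by (cases "card U") auto
  ultimately show ?thesis by (simp add: L_def)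
qed

lemma card_le_mult_if_fibres_le:
  assumes "finite L" "\<forall>A\<in>L. c A < k" "\<And>i. i < k \<Longrightarrow> card {A \<in> L. c A = i} \<le> m"
  shows "card L \<le> m * k"
proof -
  have "L = (\<Union>i<k. {A \<in> L. c A = i})" using assms(2) by blast
  then have "card L \<le> (\<Sum>i<k. card {A \<in> L. c A = i})"
    by (metis card_UN_le finite_lessThan)
  also have "\<dots> \<le> (\<Sum>i<k. m)" using assms(3) by (intro sum_mono) simp
  finally show ?thesis by (simp add: mult.commute)
qed

lemma K3_colouring_lower_bound:
  fixes c :: "'a set \<Rightarrow> nat"
  assumes U: "finite U" "odd (card U)" "card U \<noteq> 5"
    and colours: "\<forall>A\<in>Pow U. c A < k"
    and K3_free: "\<forall>i<k. \<not> berge_copy K3_V K3_E U {A \<in> Pow U. c A = i}"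
  shows "2 ^ (card U - 1) \<le> 2 * k"
proof -
  define L where "L = {A \<in> Pow U. card U < 2 * card A}"
  have "card {A \<in> L. c A = i} \<le> 2" if "i < k" for i
  proof (rule ccontr)
    assume "\<not> card {A \<in> L. c A = i} \<le> 2"
    then have "3 \<le> card {A \<in> L. c A = i}" by simp
    then obtain J where J: "J \<subseteq> {A \<in> L. c A = i}" "card J = 3"
      by (rule obtain_subset_with_card_n)
    then obtain A B C where "J = {A, B, C}" and distinct: "A \<noteq> B" "B \<noteq> C" "A \<noteq> C"
      unfolding card_3_iff by (elim exE conjE) (rule that)
    then have "A \<in> L" "B \<in> L" "C \<in> L" "c A = i" "c B = i" "c C = i" using J(1) by auto
    then have "berge_triangle A B C"
      using U distinct by (intro majority_berge_triangle) (auto simp: L_def)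
    then have "berge_copy K3_V K3_E U {A \<in> Pow U. c A = i}"
      using distinct \<open>A \<in> L\<close> \<open>B \<in> L\<close> \<open>C \<in> L\<close> \<open>c A = i\<close> \<open>c B = i\<close> \<open>c C = i\<close>
      by (intro berge_copy_K3I) (auto simp: L_def)
    with K3_free \<open>i < k\<close> show False by blast
  qed
  moreover have "finite L" "\<forall>A\<in>L. c A < k" using U(1) colours by (auto simp: L_def)
  ultimately have "card L \<le> 2 * k" by (intro card_le_mult_if_fibres_le)
  then show ?thesis using card_majority_subsets[OF U(1,2)] by (simp add: L_def)
qed

lemma not_berge_copy_K3_complementary_pairs:
  assumes "H \<subseteq> Pow U" "H \<subseteq> {P, U - P, Q, U - Q}"
  shows "\<not> berge_copy K3_V K3_E U H"
proof
  assume "berge_copy K3_V K3_E U H"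
  then obtain A B C where ABC: "A \<in> H" "B \<in> H" "C \<in> H" "A \<noteq> B" "B \<noteq> C" "A \<noteq> C"
    and "berge_triangle A B C"
    unfolding berge_copy_K3_iff[OF assms(1)] by blast
  then have "A \<inter> B \<noteq> {}" "B \<inter> C \<noteq> {}" "A \<inter> C \<noteq> {}"
    unfolding berge_triangle_def by blast+
  moreover have "A \<in> {P, U - P, Q, U - Q}" "B \<in> {P, U - P, Q, U - Q}" "C \<in> {P, U - P, Q, U - Q}"
    using ABC assms(2) by blast+
  ultimately show False
    using ABC(4-6) by (elim insertE emptyE) (simp_all add: Int_commute)
qed

definition reduced_trace :: "'a set \<Rightarrow> 'a \<Rightarrow> 'a \<Rightarrow> 'a set \<Rightarrow> 'a set" where
  "reduced_trace U a b A = (if b \<in> A then U - A else A) - {a, b}"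

lemma reduced_trace_subset: "A \<subseteq> U \<Longrightarrow> reduced_trace U a b A \<subseteq> U - {a, b}"
  unfolding reduced_trace_def by auto

lemma mem_reduced_trace_class:
  fixes a b :: 'a
  assumes "A \<subseteq> U" "b \<in> U"
  defines "T \<equiv> reduced_trace U a b A"
  shows "A \<in> {T, U - T, insert a T, U - insert a T}"
proof (cases "b \<in> A")
  case True
  then have "U - A = T \<or> U - A = insert a T" by (auto simp: T_def reduced_trace_def)
  moreover have "A = U - (U - A)" using assms(1) by blast
  ultimately show ?thesis by blast
next
  case False
  then have "A = T \<or> A = insert a T" by (auto simp: T_def reduced_trace_def)
  then show ?thesis by blast
qed

lemma K3_free_colouring:
  assumes U: "finite U" "a \<in> U" "b \<in> U" "a \<noteq> b"
  obtains c :: "'a set \<Rightarrow> nat" where "\<forall>A\<in>Pow U. c A < 2 ^ (card U - 2)"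
    "\<forall>i. \<not> berge_copy K3_V K3_E U {A \<in> Pow U. c A = i}"
proof -
  define W where "W = U - {a, b}"
  have "finite (Pow W)" using U(1) by (simp add: W_def)
  then obtain h where h: "bij_betw h (Pow W) {0..<card (Pow W)}"
    using ex_bij_betw_finite_nat by blast
  have "card (Pow W) = 2 ^ (card U - 2)"
    using U by (simp add: W_def card_Pow card_Diff_subset)
  then have h_range: "h T < 2 ^ (card U - 2)" if "T \<in> Pow W" for T
    using h that by (auto dest: bij_betw_apply)
  define c where "c A = h (reduced_trace U a b A)" for A
  have trace_W: "reduced_trace U a b A \<in> Pow W" if "A \<in> Pow U" for A
    using reduced_trace_subset that by (simp add: W_def)
  have "\<not> berge_copy K3_V K3_E U {A \<in> Pow U. c A = i}" for i
  proof (rule not_berge_copy_K3_complementary_pairs)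
    define T where "T = inv_into (Pow W) h i"
    show "{A \<in> Pow U. c A = i} \<subseteq> {T, U - T, insert a T, U - insert a T}"
    proof
      fix A assume A: "A \<in> {A \<in> Pow U. c A = i}"
      then have "h (reduced_trace U a b A) = i" "reduced_trace U a b A \<in> Pow W"
        using trace_W by (simp_all add: c_def)
      then have "T = reduced_trace U a b A"
        unfolding T_def using bij_betw_imp_inj_on[OF h] by (metis inv_into_f_f)
      moreover have "A \<subseteq> U" using A by simp
      ultimately show "A \<in> {T, U - T, insert a T, U - insert a T}"
        using mem_reduced_trace_class[OF _ U(3)] by simp
    qed
  qed auto
  moreover have "\<forall>A\<in>Pow U. c A < 2 ^ (card U - 2)"
    using h_range trace_W by (simp add: c_def)
  ultimately show ?thesis using that by blast
qed

theorem theorem1: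
  fixes n :: nat
  assumes "odd n" and "n \<ge> 3" and "n \<noteq> 5"
  shows "f_berge n K3_V K3_E = 2 ^ (n - 2)"
  unfolding f_berge_def
proof (rule Least_equality)
  have "finite {1..n}" "n - 1 \<in> {1..n}" "n \<in> {1..n}" "n - 1 \<noteq> n" using assms(2) by auto
  then obtain c :: "nat set \<Rightarrow> nat" where "\<forall>A\<in>Pow {1..n}. c A < 2 ^ (n - 2)"
    "\<forall>i. \<not> berge_copy K3_V K3_E {1..n} {A \<in> Pow {1..n}. c A = i}"
    by (rule K3_free_colouring) simp
  then show "\<exists>c :: nat set \<Rightarrow> nat. (\<forall>A\<in>Pow {1..n}. c A < 2 ^ (n - 2)) \<and>
      (\<forall>i<2 ^ (n - 2). \<not> berge_copy K3_V K3_E {1..n} {A \<in> Pow {1..n}. c A = i})"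
    by blast
next
  fix k
  assume "\<exists>c :: nat set \<Rightarrow> nat. (\<forall>A\<in>Pow {1..n}. c A < k) \<and>
      (\<forall>i<k. \<not> berge_copy K3_V K3_E {1..n} {A \<in> Pow {1..n}. c A = i})"
  then have "2 ^ (n - 1) \<le> 2 * k"
    using K3_colouring_lower_bound[of "{1..n}"] assms(1,3) by auto
  moreover have "(2::nat) ^ (n - 1) = 2 * 2 ^ (n - 2)"
    using assms(2) by (simp flip: power_Suc)
  ultimately show "2 ^ (n - 2) \<le> k" by simp
qed

end
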